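(* Let $\Omega\subset\mathbb{R}^N$ be a bounded open Lipschitz set, $s\in[0,1)$ and $f\in L^2_0(\Omega)$. Then there exists a unique $u\in\mathbb{X}^s(\Omega)$ which is a weak solution of $\mathcal{D}^s_\Omega u=f$ in $\Omega$, i.e. $\mathcal{E}_s(u,v)=\int_\Omega fv\,dx$ for all $v\in\mathbb{H}^s(\Omega)$.
   Context: A bounded open set $\Omega\subset\mathbb{R}^N$ is a Lipschitz set if each boundary point has a neighborhood in which $\partial\Omega$ is, after rotation, the graph of a Lipschitz function. $L^2_0(\Omega)=\{u\in L^2(\Omega):\int_\Omega u\,dx=0\}$. $\mathbb{H}^s(\Omega)=\{u\in L^2(\Omega):\int_\Omega\int_\Omega\frac{(u(x)-u(y))^2}{|x-y|^{N+2s}}dxdy<\infty\}$, $\mathcal{E}_s(u,v)=\frac12\int_\Omega\int_\Omega\frac{(u(x)-u(y))(v(x)-v(y))}{|x-y|^{N+2s}}dxdy$, and $\mathbb{X}^s(\Omega)=\{u\in\mathbb{H}^s(\Omega):\int_\Omega u\,dx=0\}$. Here $\mathcal{D}^s_\Omega u(x)=\lim_{\varepsilon\to0^+}\int_{\Omega\setminus B_\varepsilon(x)}\frac{u(x)-u(y)}{|x-y|^{N+2s}}dy$. *)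

theory Defs
  imports "HOL-Analysis.Analysis"
begin

text \<open>Lipschitz open set: near every boundary point, after an orthogonal change of
coordinates R, the set is the region below the graph of a Lipschitz function g of the
first N-1 coordinates (the coordinate b plays the role of the N-th one).\<close>
definition lipschitz_set :: "'a::euclidean_space set \<Rightarrow> bool" where
  "lipschitz_set \<Omega> \<longleftrightarrow> open \<Omega> \<and>
     (\<forall>p\<in>frontier \<Omega>. \<exists>r>0. \<exists>(R::'a\<Rightarrow>'a) (b::'a) (g::'a\<Rightarrow>real) (C::real).
        orthogonal_transformation R \<and> b \<in> Basis \<and>
        C-lipschitz_on {y. y \<bullet> b = 0} g \<and>
        \<Omega> \<inter> ball p r =
          {x \<in> ball p r. R x \<bullet> b < g (R x - (R x \<bullet> b) *\<^sub>R b)})"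

definition L2 :: "'a::euclidean_space set \<Rightarrow> ('a \<Rightarrow> real) set" where
  "L2 \<Omega> = {u. u \<in> borel_measurable (lebesgue_on \<Omega>) \<and>
                 integrable (lebesgue_on \<Omega>) (\<lambda>x. (u x)\<^sup>2)}"

definition L2_0 :: "'a::euclidean_space set \<Rightarrow> ('a \<Rightarrow> real) set" where
  "L2_0 \<Omega> = {u \<in> L2 \<Omega>. integral\<^sup>L (lebesgue_on \<Omega>) u = 0}"

definition Hs :: "real \<Rightarrow> 'a::euclidean_space set \<Rightarrow> ('a \<Rightarrow> real) set" where
  "Hs s \<Omega> = {u \<in> L2 \<Omega>.
     (\<integral>\<^sup>+ z. ennreal ((u (fst z) - u (snd z))\<^sup>2 /
                   norm (fst z - snd z) powr (real DIM('a) + 2 * s))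
        \<partial>(lebesgue_on \<Omega> \<Otimes>\<^sub>M lebesgue_on \<Omega>)) < \<infinity>}"

definition Xs :: "real \<Rightarrow> 'a::euclidean_space set \<Rightarrow> ('a \<Rightarrow> real) set" where
  "Xs s \<Omega> = {u \<in> Hs s \<Omega>. integral\<^sup>L (lebesgue_on \<Omega>) u = 0}"

definition Es :: "real \<Rightarrow> 'a::euclidean_space set \<Rightarrow> ('a \<Rightarrow> real) \<Rightarrow> ('a \<Rightarrow> real) \<Rightarrow> real" where
  "Es s \<Omega> u v = 1/2 * (\<integral> z. (u (fst z) - u (snd z)) * (v (fst z) - v (snd z)) /
                   norm (fst z - snd z) powr (real DIM('a) + 2 * s)
        \<partial>(lebesgue_on \<Omega> \<Otimes>\<^sub>M lebesgue_on \<Omega>))"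

definition weak_solution :: "real \<Rightarrow> 'a::euclidean_space set \<Rightarrow> ('a \<Rightarrow> real) \<Rightarrow> ('a \<Rightarrow> real) \<Rightarrow> bool" where
  "weak_solution s \<Omega> f u \<longleftrightarrow>
     (\<forall>v\<in>Hs s \<Omega>. Es s \<Omega> u v = (\<integral> x. f x * v x \<partial>lebesgue_on \<Omega>))"

end

theory Submission
  imports Defs
begin

text \<open>
  Weak solutions are exactly the representers of \<open>v \<mapsto> \<integral> f v\<close> for the form \<open>Es\<close> on the
  mean-zero space \<open>Xs\<close>: \<open>Es\<close> ignores constants and \<open>\<integral> f = 0\<close>, so testing against
  \<open>v \<in> Hs\<close> is the same as testing against \<open>v\<close> minus its mean.
  On \<open>Xs\<close> the form is coercive by a Poincare inequality that needs only boundedness of \<open>\<Omega>\<close>: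
  the kernel is at least \<open>diam \<Omega> powr -(N + 2s)\<close>, and for mean-zero \<open>u\<close> the double integral
  of \<open>(u x - u y)\<^sup>2\<close> equals \<open>2 |\<Omega>| \<integral> u\<^sup>2\<close>. Hence an \<open>Es\<close>-Cauchy sequence is \<open>L\<^sup>2\<close>-Cauchy, a
  subsequence converges a.e., and Fatou's lemma makes the limit an \<open>Es\<close>-limit: \<open>Xs\<close> is complete.
  The representer is the limit of a minimizing sequence of the energy \<open>Es u u / 2 - \<integral> f u\<close>
  (Dirichlet's principle), and uniqueness is Poincare again.
\<close>

lemma quadratic_nonneg_imp_discriminant_le:
  fixes a b c :: real
  assumes "0 \<le> c" and nonneg: "\<And>t. 0 \<le> a + 2 * b * t + c * t\<^sup>2"
  shows "b\<^sup>2 \<le> a * c"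
proof (cases "c = 0")
  case True
  show ?thesis
  proof (rule ccontr)
    assume "\<not> ?thesis"
    then have "b \<noteq> 0" using True by auto
    have "0 \<le> a + 2 * b * (-(a + 1) / (2 * b)) + c * (-(a + 1) / (2 * b))\<^sup>2" by (rule nonneg)
    also have "\<dots> = -1" using True \<open>b \<noteq> 0\<close> by (simp add: field_simps)
    finally show False by simp
  qed
next
  case False
  then have "0 < c" using assms(1) by simp
  have "0 \<le> a + 2 * b * (-b / c) + c * (-b / c)\<^sup>2" by (rule nonneg)
  also have "\<dots> = (a * c - b\<^sup>2) / c" using \<open>0 < c\<close> by (simp add: field_simps power2_eq_square)
  finally show ?thesis using \<open>0 < c\<close> by (simp add: zero_le_divide_iff)
qed

locale symmetric_psd_form =
  fixes V :: "('a \<Rightarrow> real) set" and B :: "('a \<Rightarrow> real) \<Rightarrow> ('a \<Rightarrow> real) \<Rightarrow> real"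
  assumes lincomb_in: "u \<in> V \<Longrightarrow> v \<in> V \<Longrightarrow> (\<lambda>x. a * u x + b * v x) \<in> V"
    and linear_left: "u \<in> V \<Longrightarrow> v \<in> V \<Longrightarrow> w \<in> V \<Longrightarrow>
      B (\<lambda>x. a * u x + b * v x) w = a * B u w + b * B v w"
    and symmetric: "u \<in> V \<Longrightarrow> v \<in> V \<Longrightarrow> B u v = B v u"
    and nonneg: "u \<in> V \<Longrightarrow> 0 \<le> B u u"
begin

definition sqdist :: "('a \<Rightarrow> real) \<Rightarrow> ('a \<Rightarrow> real) \<Rightarrow> real" where
  "sqdist u v = B (\<lambda>x. u x - v x) (\<lambda>x. u x - v x)"

lemma diff_in: "u \<in> V \<Longrightarrow> v \<in> V \<Longrightarrow> (\<lambda>x. u x - v x) \<in> V"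
  using lincomb_in[of u v 1 "-1"] by simp

lemma expand:
  assumes "u \<in> V" "v \<in> V"
  shows "B (\<lambda>x. a1 * u x + b1 * v x) (\<lambda>x. a2 * u x + b2 * v x)
    = a1 * a2 * B u u + (a1 * b2 + b1 * a2) * B u v + b1 * b2 * B v v"
proof -
  have linear_right: "B w (\<lambda>x. a * u x + b * v x) = a * B w u + b * B w v" if "w \<in> V" for w a b
    using that assms by (simp add: symmetric[of w] lincomb_in linear_left)
  show ?thesis
    using assms lincomb_in by (simp add: linear_left linear_right symmetric[of v u] algebra_simps)
qed

lemma Cauchy_Schwarz:
  assumes "u \<in> V" "v \<in> V"
  shows "(B u v)\<^sup>2 \<le> B u u * B v v"
proof (rule quadratic_nonneg_imp_discriminant_le)
  show "0 \<le> B v v" using assms nonneg by simp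
  fix t
  have "0 \<le> B (\<lambda>x. 1 * u x + t * v x) (\<lambda>x. 1 * u x + t * v x)"
    using assms by (intro nonneg lincomb_in)
  also have "\<dots> = B u u + 2 * B u v * t + B v v * t\<^sup>2"
    unfolding expand[OF assms] by (simp add: power2_eq_square algebra_simps)
  finally show "0 \<le> B u u + 2 * B u v * t + B v v * t\<^sup>2" .
qed

lemma tendsto_left:
  assumes "\<And>n. u n \<in> V" "w \<in> V" "v \<in> V" and lim: "(\<lambda>n. sqdist (u n) w) \<longlonglongrightarrow> 0"
  shows "(\<lambda>n. B (u n) v) \<longlonglongrightarrow> B w v"
proof -
  have diff: "B (u n) v - B w v = B (\<lambda>x. u n x - w x) v" for n
    using linear_left[of "u n" w v 1 "-1"] assms by simp
  have "(\<lambda>n. (B (\<lambda>x. u n x - w x) v)\<^sup>2) \<longlonglongrightarrow> 0"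
  proof (rule tendsto_sandwich[of "\<lambda>_. 0" _ _ "\<lambda>n. sqdist (u n) w * B v v"])
    show "\<forall>\<^sub>F n in sequentially. (B (\<lambda>x. u n x - w x) v)\<^sup>2 \<le> sqdist (u n) w * B v v"
      using assms by (intro always_eventually allI) (simp add: sqdist_def Cauchy_Schwarz diff_in)
    show "(\<lambda>n. sqdist (u n) w * B v v) \<longlonglongrightarrow> 0"
      using tendsto_mult_left_zero[OF lim] .
  qed auto
  then have "(\<lambda>n. sqrt ((B (\<lambda>x. u n x - w x) v)\<^sup>2)) \<longlonglongrightarrow> sqrt 0"
    by (rule tendsto_real_sqrt)
  then have "(\<lambda>n. B (\<lambda>x. u n x - w x) v) \<longlonglongrightarrow> 0"
    by (simp add: tendsto_rabs_zero_iff)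
  then show ?thesis
    unfolding diff[symmetric] by (simp add: LIM_zero_iff)
qed

end

locale bounded_functional = symmetric_psd_form V B
  for V :: "('a \<Rightarrow> real) set" and B +
  fixes l :: "('a \<Rightarrow> real) \<Rightarrow> real" and C :: real
  assumes l_linear: "u \<in> V \<Longrightarrow> v \<in> V \<Longrightarrow> l (\<lambda>x. a * u x + b * v x) = a * l u + b * l v"
    and l_bounded: "u \<in> V \<Longrightarrow> (l u)\<^sup>2 \<le> C * B u u"
begin

definition energy :: "('a \<Rightarrow> real) \<Rightarrow> real" where
  "energy u = B u u / 2 - l u"

lemma energy_lower_bound:
  assumes "u \<in> V"
  shows "- \<bar>C\<bar> / 2 \<le> energy u"
proof -
  have "(l u)\<^sup>2 \<le> \<bar>C\<bar> * B u u"
    using l_bounded[OF assms] mult_right_mono[OF abs_ge_self nonneg[OF assms]] by (rule order_trans)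
  also have "\<dots> \<le> (B u u / 2 + \<bar>C\<bar> / 2)\<^sup>2"
    using zero_le_power2[of "B u u / 2 - \<bar>C\<bar> / 2"] by (simp add: power2_eq_square algebra_simps)
  finally have "l u \<le> B u u / 2 + \<bar>C\<bar> / 2"
    by (rule power2_le_imp_le) (simp add: nonneg[OF assms])
  then show ?thesis unfolding energy_def by simp
qed

lemma energy_along_line:
  assumes "u \<in> V" "v \<in> V"
  shows "energy (\<lambda>x. 1 * u x + t * v x) = energy u + t * (B u v - l v) + t\<^sup>2 * B v v / 2"
  unfolding energy_def expand[OF assms] l_linear[OF assms] by (simp add: power2_eq_square algebra_simps)

lemma energy_parallelogram:
  assumes "u \<in> V" "v \<in> V"
  shows "sqdist u v / 4 = energy u + energy v - 2 * energy (\<lambda>x. (1/2) * u x + (1/2) * v x)"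
proof -
  have "sqdist u v = B (\<lambda>x. 1 * u x + (-1) * v x) (\<lambda>x. 1 * u x + (-1) * v x)"
    by (simp add: sqdist_def)
  then show ?thesis
    unfolding energy_def expand[OF assms] l_linear[OF assms] by (simp add: field_simps)
qed

lemma minimizing_sequence_Cauchy:
  assumes lower: "\<And>v. v \<in> V \<Longrightarrow> m \<le> energy v" and u: "\<And>n. u n \<in> V"
    and lim: "(\<lambda>n. energy (u n)) \<longlonglongrightarrow> m" and "0 < e"
  shows "\<exists>N. \<forall>n\<ge>N. \<forall>k\<ge>N. sqdist (u n) (u k) < e"
proof -
  obtain N where N: "\<And>n. N \<le> n \<Longrightarrow> energy (u n) < m + e / 8"
    using order_tendstoD(2)[OF lim, of "m + e / 8"] \<open>0 < e\<close> by (auto simp: eventually_sequentially)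
  have "sqdist (u n) (u k) < e" if "N \<le> n" "N \<le> k" for n k
  proof -
    have "m \<le> energy (\<lambda>x. (1/2) * u n x + (1/2) * u k x)"
      using u by (intro lower lincomb_in)
    then show ?thesis
      using energy_parallelogram[OF u u, of n k] N[OF \<open>N \<le> n\<close>] N[OF \<open>N \<le> k\<close>] by linarith
  qed
  then show ?thesis by blast
qed

lemma limit_of_minimizing_sequence_solves:
  assumes lower: "\<And>v. v \<in> V \<Longrightarrow> m \<le> energy v" and u: "\<And>n. u n \<in> V"
    and lim: "(\<lambda>n. energy (u n)) \<longlonglongrightarrow> m"
    and "w \<in> V" and conv: "(\<lambda>n. sqdist (u n) w) \<longlonglongrightarrow> 0" and "v \<in> V"
  shows "B w v = l v"
proof -
  have "0 \<le> 0 + 2 * ((B w v - l v) / 2) * t + (B v v / 2) * t\<^sup>2" for t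
  proof -
    have "m \<le> energy (\<lambda>x. 1 * u n x + t * v x)" for n
      using u \<open>v \<in> V\<close> by (intro lower lincomb_in)
    then have "m \<le> energy (u n) + t * (B (u n) v - l v) + t\<^sup>2 * B v v / 2" for n
      unfolding energy_along_line[OF u \<open>v \<in> V\<close>] .
    moreover have "(\<lambda>n. energy (u n) + t * (B (u n) v - l v) + t\<^sup>2 * B v v / 2)
        \<longlonglongrightarrow> m + t * (B w v - l v) + t\<^sup>2 * B v v / 2"
      by (intro tendsto_intros lim tendsto_left u \<open>w \<in> V\<close> \<open>v \<in> V\<close> conv)
    ultimately have "m \<le> m + t * (B w v - l v) + t\<^sup>2 * B v v / 2"
      by (intro LIMSEQ_le_const) auto
    then show ?thesis by (simp add: field_simps)
  qed
  then have "((B w v - l v) / 2)\<^sup>2 \<le> 0 * (B v v / 2)"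
    using nonneg[OF \<open>v \<in> V\<close>] by (intro quadratic_nonneg_imp_discriminant_le) auto
  then show ?thesis by simp
qed

theorem Riesz_representation:
  assumes "V \<noteq> {}"
    and complete: "\<And>u. (\<And>n. u n \<in> V) \<Longrightarrow>
      (\<And>e. 0 < e \<Longrightarrow> \<exists>N. \<forall>n\<ge>N. \<forall>k\<ge>N. sqdist (u n) (u k) < e) \<Longrightarrow>
      \<exists>w\<in>V. (\<lambda>n. sqdist (u n) w) \<longlonglongrightarrow> 0"
  shows "\<exists>w\<in>V. \<forall>v\<in>V. B w v = l v"
proof -
  define m where "m = Inf (energy ` V)"
  have bdd: "bdd_below (energy ` V)"
    by (intro bdd_belowI[of _ "- \<bar>C\<bar> / 2"]) (use energy_lower_bound in blast)
  then have lower: "m \<le> energy v" if "v \<in> V" for v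
    unfolding m_def using that by (simp add: cInf_lower)
  have "m \<in> closure (energy ` V)"
    unfolding m_def using \<open>V \<noteq> {}\<close> bdd by (intro closure_contains_Inf) auto
  then obtain y where y: "\<And>n. y n \<in> energy ` V" and "y \<longlonglongrightarrow> m"
    unfolding closure_sequential by blast
  have "\<forall>n. \<exists>x. x \<in> V \<and> energy x = y n"
    using y by (metis imageE)
  then obtain u where u: "\<And>n. u n \<in> V" and "\<And>n. energy (u n) = y n"
    by (metis choice)
  with \<open>y \<longlonglongrightarrow> m\<close> have lim: "(\<lambda>n. energy (u n)) \<longlonglongrightarrow> m" by simp
  obtain w where "w \<in> V" "(\<lambda>n. sqdist (u n) w) \<longlonglongrightarrow> 0"
    using complete[OF u minimizing_sequence_Cauchy[OF lower u lim]] by blast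
  then show ?thesis
    using limit_of_minimizing_sequence_solves[OF lower u lim] by blast
qed

end

lemma abs_mult_le_sum_squares: "\<bar>a * b\<bar> \<le> a\<^sup>2 + b\<^sup>2" for a b :: real
proof -
  have "2 * \<bar>a * b\<bar> \<le> a\<^sup>2 + b\<^sup>2"
    using zero_le_power2[of "\<bar>a\<bar> - \<bar>b\<bar>"] by (simp add: power2_eq_square algebra_simps abs_mult)
  then show ?thesis using abs_ge_zero[of "a * b"] by linarith
qed

lemma integrable_mult_of_square_integrable:
  fixes f g :: "'b \<Rightarrow> real"
  assumes [measurable]: "f \<in> borel_measurable M" "g \<in> borel_measurable M"
    and "integrable M (\<lambda>x. (f x)\<^sup>2)" "integrable M (\<lambda>x. (g x)\<^sup>2)"
  shows "integrable M (\<lambda>x. f x * g x)"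
proof (rule Bochner_Integration.integrable_bound)
  show "integrable M (\<lambda>x. (f x)\<^sup>2 + (g x)\<^sup>2)" using assms by simp
  show "AE x in M. norm (f x * g x) \<le> norm ((f x)\<^sup>2 + (g x)\<^sup>2)"
    by (intro AE_I2) (simp add: abs_mult_le_sum_squares)
qed measurable

lemma square_integrable_lincomb:
  fixes f g :: "'b \<Rightarrow> real"
  assumes [measurable]: "f \<in> borel_measurable M" "g \<in> borel_measurable M"
    and "integrable M (\<lambda>x. (f x)\<^sup>2)" "integrable M (\<lambda>x. (g x)\<^sup>2)"
  shows "integrable M (\<lambda>x. (a * f x + b * g x)\<^sup>2)"
proof -
  have "(\<lambda>x. (a * f x + b * g x)\<^sup>2) = (\<lambda>x. a\<^sup>2 * (f x)\<^sup>2 + 2 * a * b * (f x * g x) + b\<^sup>2 * (g x)\<^sup>2)"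
    by (simp add: power2_eq_square algebra_simps)
  then show ?thesis
    using assms integrable_mult_of_square_integrable[OF assms] by simp
qed

lemma integral_mult_Cauchy_Schwarz:
  fixes f g :: "'b \<Rightarrow> real"
  assumes [measurable]: "f \<in> borel_measurable M" "g \<in> borel_measurable M"
    and f2: "integrable M (\<lambda>x. (f x)\<^sup>2)" and g2: "integrable M (\<lambda>x. (g x)\<^sup>2)"
  shows "(\<integral>x. f x * g x \<partial>M)\<^sup>2 \<le> (\<integral>x. (f x)\<^sup>2 \<partial>M) * (\<integral>x. (g x)\<^sup>2 \<partial>M)"
proof (rule quadratic_nonneg_imp_discriminant_le)
  show "0 \<le> (\<integral>x. (g x)\<^sup>2 \<partial>M)" by simp
  have fg: "integrable M (\<lambda>x. f x * g x)"
    by (rule integrable_mult_of_square_integrable[OF assms])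
  fix t
  have "0 \<le> (\<integral>x. (f x + t * g x)\<^sup>2 \<partial>M)" by simp
  also have "\<dots> = (\<integral>x. (f x)\<^sup>2 + 2 * t * (f x * g x) + t\<^sup>2 * (g x)\<^sup>2 \<partial>M)"
    by (rule Bochner_Integration.integral_cong) (simp_all add: power2_eq_square algebra_simps)
  also have "\<dots> = (\<integral>x. (f x)\<^sup>2 \<partial>M) + 2 * (\<integral>x. f x * g x \<partial>M) * t + (\<integral>x. (g x)\<^sup>2 \<partial>M) * t\<^sup>2"
    using f2 g2 fg by simp
  finally show "0 \<le> (\<integral>x. (f x)\<^sup>2 \<partial>M) + 2 * (\<integral>x. f x * g x \<partial>M) * t + (\<integral>x. (g x)\<^sup>2 \<partial>M) * t\<^sup>2" .
qed

lemma nn_integral_le_of_AE_tendsto: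
  fixes g :: "nat \<Rightarrow> 'b \<Rightarrow> real"
  assumes "\<And>k. g k \<in> borel_measurable M"
    and "AE x in M. (\<lambda>k. g k x) \<longlonglongrightarrow> G x"
    and "\<And>k. K \<le> k \<Longrightarrow> (\<integral>\<^sup>+ x. g k x \<partial>M) \<le> c"
  shows "(\<integral>\<^sup>+ x. G x \<partial>M) \<le> c"
proof -
  have "(\<integral>\<^sup>+ x. G x \<partial>M) = (\<integral>\<^sup>+ x. liminf (\<lambda>k. ennreal (g k x)) \<partial>M)"
    using assms(2) by (intro nn_integral_cong_AE, eventually_elim)
      (auto intro: lim_imp_Liminf[symmetric] tendsto_ennrealI)
  also have "\<dots> \<le> liminf (\<lambda>k. \<integral>\<^sup>+ x. g k x \<partial>M)"
    by (rule nn_integral_liminf) (use assms(1) in measurable)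
  also have "\<dots> \<le> c"
    using assms(3) by (intro Liminf_le) (auto simp: eventually_sequentially)
  finally show ?thesis .
qed

lemma nn_integral_le_of_AE_subseq_limit:
  fixes F :: "nat \<Rightarrow> nat \<Rightarrow> 'b \<Rightarrow> real" and G :: "nat \<Rightarrow> 'b \<Rightarrow> real"
  assumes "\<And>n m. F n m \<in> borel_measurable M" and "strict_mono r"
    and "\<And>n. AE x in M. (\<lambda>k. F n (r k) x) \<longlonglongrightarrow> G n x"
    and "\<exists>N. \<forall>n\<ge>N. \<forall>m\<ge>N. (\<integral>\<^sup>+ x. F n m x \<partial>M) \<le> c"
  shows "\<exists>N. \<forall>n\<ge>N. (\<integral>\<^sup>+ x. G n x \<partial>M) \<le> c"
proof -
  obtain N where N: "\<And>n m. N \<le> n \<Longrightarrow> N \<le> m \<Longrightarrow> (\<integral>\<^sup>+ x. F n m x \<partial>M) \<le> c"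
    using assms(4) by blast
  have "(\<integral>\<^sup>+ x. G n x \<partial>M) \<le> c" if "N \<le> n" for n
  proof (rule nn_integral_le_of_AE_tendsto[where K = N])
    fix k assume "N \<le> k"
    then show "(\<integral>\<^sup>+ x. F n (r k) x \<partial>M) \<le> c"
      using N[OF \<open>N \<le> n\<close>] seq_suble[OF \<open>strict_mono r\<close>, of k] by simp
  qed (use assms in auto)
  then show ?thesis by blast
qed

lemma (in finite_measure) square_Cauchy_imp_AE_convergent_subseq:
  fixes u :: "nat \<Rightarrow> 'a \<Rightarrow> real"
  assumes [measurable]: "\<And>n. u n \<in> borel_measurable M"
    and sq: "\<And>n. integrable M (\<lambda>x. (u n x)\<^sup>2)"
    and Cauchy: "\<And>e. 0 < e \<Longrightarrow> \<exists>N. \<forall>n\<ge>N. \<forall>m\<ge>N. (\<integral>x. (u n x - u m x)\<^sup>2 \<partial>M) < e"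
  obtains r w where "strict_mono r" "w \<in> borel_measurable M" "AE x in M. (\<lambda>k. u (r k) x) \<longlonglongrightarrow> w x"
proof -
  define \<mu> where "\<mu> = measure M (space M)"
  have "0 \<le> \<mu>" by (simp add: \<mu>_def)
  have sq_diff: "integrable M (\<lambda>x. (u n x - u m x)\<^sup>2)" for n m
    using square_integrable_lincomb[OF _ _ sq sq, of n m 1 "-1"] by simp
  have L1_le_L2: "(\<integral>x. norm (u n x - u m x) \<partial>M)\<^sup>2 \<le> (\<integral>x. (u n x - u m x)\<^sup>2 \<partial>M) * \<mu>" for n m
    using integral_mult_Cauchy_Schwarz[of "\<lambda>x. \<bar>u n x - u m x\<bar>" M "\<lambda>_. 1"] sq_diff
    by (simp add: \<mu>_def)
  have L1_Cauchy: "\<exists>N. \<forall>n\<ge>N. \<forall>m\<ge>N. (\<integral>x. norm (u n x - u m x) \<partial>M) < e" if "0 < e" for e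
  proof -
    obtain N where N: "\<And>n m. N \<le> n \<Longrightarrow> N \<le> m \<Longrightarrow> (\<integral>x. (u n x - u m x)\<^sup>2 \<partial>M) < e\<^sup>2 / (\<mu> + 1)"
      using Cauchy[of "e\<^sup>2 / (\<mu> + 1)"] \<open>0 < e\<close> by (auto simp: \<mu>_def add_nonneg_pos)
    have "(\<integral>x. norm (u n x - u m x) \<partial>M) < e" if "N \<le> n" "N \<le> m" for n m
    proof (rule power2_less_imp_less)
      have "(\<integral>x. (u n x - u m x)\<^sup>2 \<partial>M) * \<mu> \<le> e\<^sup>2 / (\<mu> + 1) * \<mu>"
        using N[OF that] by (intro mult_right_mono) (auto simp: \<mu>_def)
      also have "\<dots> < e\<^sup>2"
        using \<open>0 < e\<close> \<open>0 \<le> \<mu>\<close> by (simp add: field_simps)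
      finally show "(\<integral>x. norm (u n x - u m x) \<partial>M)\<^sup>2 < e\<^sup>2"
        using L1_le_L2[of n m] by linarith
    qed (use \<open>0 < e\<close> in simp)
    then show ?thesis by blast
  qed
  have "integrable M (u n)" for n
    by (rule square_integrable_imp_integrable) (simp_all add: sq)
  then obtain r where r: "strict_mono r" and r_Cauchy: "AE x in M. Cauchy (\<lambda>k. u (r k) x)"
    using L1_Cauchy by (rule cauchy_L1_AE_cauchy_subseq)
  from r_Cauchy have "AE x in M. (\<lambda>k. u (r k) x) \<longlonglongrightarrow> lim (\<lambda>k. u (r k) x)"
    by eventually_elim (simp add: Cauchy_convergent_iff convergent_LIMSEQ_iff)
  moreover have "(\<lambda>x. lim (\<lambda>k. u (r k) x)) \<in> borel_measurable M" by measurable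
  ultimately show ?thesis using r that by blast
qed

lemma (in pair_sigma_finite) AE_pair_measure_fst:
  assumes "AE x in M1. Q x"
  shows "AE z in M1 \<Otimes>\<^sub>M M2. Q (fst z)"
proof -
  obtain N where N: "{x \<in> space M1. \<not> Q x} \<subseteq> N" "N \<in> null_sets M1"
    using assms by (auto elim!: AE_E)
  have "N \<times> space M2 \<in> null_sets (M1 \<Otimes>\<^sub>M M2)" using N by (intro M2.times_in_null_sets1) auto
  moreover have "{z \<in> space (M1 \<Otimes>\<^sub>M M2). \<not> Q (fst z)} \<subseteq> N \<times> space M2"
    using N(1) by (auto simp: space_pair_measure)
  ultimately show ?thesis by (rule AE_I')
qed

lemma (in pair_sigma_finite) AE_pair_measure_snd:
  assumes "AE y in M2. Q y"
  shows "AE z in M1 \<Otimes>\<^sub>M M2. Q (snd z)"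
proof -
  obtain N where N: "{y \<in> space M2. \<not> Q y} \<subseteq> N" "N \<in> null_sets M2"
    using assms by (auto elim!: AE_E)
  have "space M1 \<times> N \<in> null_sets (M1 \<Otimes>\<^sub>M M2)" using N by (intro M2.times_in_null_sets2) auto
  moreover have "{z \<in> space (M1 \<Otimes>\<^sub>M M2). \<not> Q (snd z)} \<subseteq> space M1 \<times> N"
    using N(1) by (auto simp: space_pair_measure)
  ultimately show ?thesis by (rule AE_I')
qed

abbreviation gagliardo_sq :: "real \<Rightarrow> ('a::euclidean_space \<Rightarrow> real) \<Rightarrow> 'a \<times> 'a \<Rightarrow> real" where
  "gagliardo_sq s u \<equiv> \<lambda>z. (u (fst z) - u (snd z))\<^sup>2 / norm (fst z - snd z) powr (real DIM('a) + 2 * s)"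

abbreviation gagliardo_prod ::
    "real \<Rightarrow> ('a::euclidean_space \<Rightarrow> real) \<Rightarrow> ('a \<Rightarrow> real) \<Rightarrow> 'a \<times> 'a \<Rightarrow> real" where
  "gagliardo_prod s u v \<equiv> \<lambda>z. (u (fst z) - u (snd z)) * (v (fst z) - v (snd z)) /
     norm (fst z - snd z) powr (real DIM('a) + 2 * s)"

lemma gagliardo_sq_lincomb_le:
  fixes u v :: "'a::euclidean_space \<Rightarrow> real"
  shows "gagliardo_sq s (\<lambda>x. a * u x + b * v x) z \<le> 2 * a\<^sup>2 * gagliardo_sq s u z + 2 * b\<^sup>2 * gagliardo_sq s v z"
proof -
  let ?k = "norm (fst z - snd z) powr (real DIM('a) + 2 * s)"
  let ?p = "u (fst z) - u (snd z)" and ?q = "v (fst z) - v (snd z)"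
  have "gagliardo_sq s (\<lambda>x. a * u x + b * v x) z = (a * ?p + b * ?q)\<^sup>2 / ?k"
    by (simp add: algebra_simps)
  also have "\<dots> \<le> (2 * a\<^sup>2 * ?p\<^sup>2 + 2 * b\<^sup>2 * ?q\<^sup>2) / ?k"
    using zero_le_power2[of "a * ?p - b * ?q"]
    by (intro divide_right_mono) (simp_all add: power2_eq_square algebra_simps)
  also have "\<dots> = 2 * a\<^sup>2 * gagliardo_sq s u z + 2 * b\<^sup>2 * gagliardo_sq s v z"
    by (simp add: add_divide_distrib)
  finally show ?thesis .
qed

locale bounded_open_domain =
  fixes \<Omega> :: "'a::euclidean_space set"
  assumes bounded: "bounded \<Omega>" and open_domain: "open \<Omega>"
begin

abbreviation "M \<equiv> lebesgue_on \<Omega>"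
abbreviation "P \<equiv> M \<Otimes>\<^sub>M M"

lemma lmeasurable_domain: "\<Omega> \<in> lmeasurable"
  using bounded open_domain by (simp add: bounded_set_imp_lmeasurable borel_open)

sublocale M: finite_measure M
  using lmeasurable_domain by (rule finite_measure_lebesgue_on)

sublocale pair_sigma_finite M M ..

lemma measurable_gagliardo_prod [measurable]:
  assumes "u \<in> borel_measurable M" "v \<in> borel_measurable M"
  shows "gagliardo_prod s u v \<in> borel_measurable P"
proof -
  have "(\<lambda>x. x) \<in> borel_measurable M"
    by (intro measurable_restrict_space1) (use measurable_completion[of "\<lambda>x. x" lborel borel] in simp)
  note [measurable] = measurable_compose[OF measurable_fst this] measurable_compose[OF measurable_snd this]
    measurable_compose[OF measurable_fst assms(1)] measurable_compose[OF measurable_snd assms(1)]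
    measurable_compose[OF measurable_fst assms(2)] measurable_compose[OF measurable_snd assms(2)]
  show ?thesis by measurable
qed

lemma measurable_gagliardo_sq [measurable]:
  "u \<in> borel_measurable M \<Longrightarrow> gagliardo_sq s u \<in> borel_measurable P"
  using measurable_gagliardo_prod[of u u s] by (simp add: power2_eq_square)

lemma L2_integrable: "u \<in> L2 \<Omega> \<Longrightarrow> integrable M u"
  by (rule M.square_integrable_imp_integrable) (simp_all add: L2_def)

lemma L2_lincomb:
  assumes "u \<in> L2 \<Omega>" "v \<in> L2 \<Omega>"
  shows "(\<lambda>x. a * u x + b * v x) \<in> L2 \<Omega>"
proof -
  have [measurable]: "u \<in> borel_measurable M" "v \<in> borel_measurable M"
    using assms by (simp_all add: L2_def)
  show ?thesis
    using assms by (simp add: L2_def square_integrable_lincomb)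
qed

lemma L2_mult_integrable: "u \<in> L2 \<Omega> \<Longrightarrow> v \<in> L2 \<Omega> \<Longrightarrow> integrable M (\<lambda>x. u x * v x)"
  by (simp add: L2_def integrable_mult_of_square_integrable)

lemma Hs_iff: "u \<in> Hs s \<Omega> \<longleftrightarrow> u \<in> L2 \<Omega> \<and> integrable P (gagliardo_sq s u)"
  by (auto simp: Hs_def L2_def integrable_iff_bounded)

lemma Hs_lincomb:
  assumes "u \<in> Hs s \<Omega>" "v \<in> Hs s \<Omega>"
  shows "(\<lambda>x. a * u x + b * v x) \<in> Hs s \<Omega>"
proof -
  have L2: "(\<lambda>x. a * u x + b * v x) \<in> L2 \<Omega>"
    using assms by (simp add: Hs_iff L2_lincomb)
  have "integrable P (gagliardo_sq s (\<lambda>x. a * u x + b * v x))"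
  proof (rule Bochner_Integration.integrable_bound)
    show "integrable P (\<lambda>z. 2 * a\<^sup>2 * gagliardo_sq s u z + 2 * b\<^sup>2 * gagliardo_sq s v z)"
      using assms by (intro Bochner_Integration.integrable_add integrable_mult_right) (simp_all add: Hs_iff)
    show "AE z in P. norm (gagliardo_sq s (\<lambda>x. a * u x + b * v x) z)
        \<le> norm (2 * a\<^sup>2 * gagliardo_sq s u z + 2 * b\<^sup>2 * gagliardo_sq s v z)"
      using gagliardo_sq_lincomb_le by (intro AE_I2) simp
  qed (use L2 in \<open>intro measurable_gagliardo_sq, simp add: L2_def\<close>)
  with L2 show ?thesis by (simp add: Hs_iff)
qed

lemma Hs_diff: "u \<in> Hs s \<Omega> \<Longrightarrow> v \<in> Hs s \<Omega> \<Longrightarrow> (\<lambda>x. u x - v x) \<in> Hs s \<Omega>"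
  using Hs_lincomb[where a = 1 and b = "-1"] by simp

lemma gagliardo_prod_integrable:
  assumes "u \<in> Hs s \<Omega>" "v \<in> Hs s \<Omega>"
  shows "integrable P (gagliardo_prod s u v)"
proof (rule Bochner_Integration.integrable_bound)
  show "integrable P (\<lambda>z. gagliardo_sq s u z + gagliardo_sq s v z)"
    using assms by (simp add: Hs_iff)
  show "AE z in P. norm (gagliardo_prod s u v z) \<le> norm (gagliardo_sq s u z + gagliardo_sq s v z)"
  proof (intro AE_I2)
    fix z :: "'a \<times> 'a"
    let ?k = "norm (fst z - snd z) powr (real DIM('a) + 2 * s)"
    let ?p = "u (fst z) - u (snd z)" and ?q = "v (fst z) - v (snd z)"
    have "\<bar>?p * ?q\<bar> / ?k \<le> (?p\<^sup>2 + ?q\<^sup>2) / ?k"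
      by (intro divide_right_mono abs_mult_le_sum_squares) simp
    then show "norm (gagliardo_prod s u v z) \<le> norm (gagliardo_sq s u z + gagliardo_sq s v z)"
      by (simp add: add_divide_distrib)
  qed
qed (use assms in \<open>simp add: Hs_iff L2_def measurable_gagliardo_prod\<close>)

lemma Es_linear_left:
  assumes "u \<in> Hs s \<Omega>" "v \<in> Hs s \<Omega>" "w \<in> Hs s \<Omega>"
  shows "Es s \<Omega> (\<lambda>x. a * u x + b * v x) w = a * Es s \<Omega> u w + b * Es s \<Omega> v w"
proof -
  have "gagliardo_prod s (\<lambda>x. a * u x + b * v x) w
      = (\<lambda>z. a * gagliardo_prod s u w z + b * gagliardo_prod s v w z)"
    by (rule ext) (simp add: divide_inverse algebra_simps)
  moreover have "(\<integral>z. a * gagliardo_prod s u w z + b * gagliardo_prod s v w z \<partial>P)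
      = a * (\<integral>z. gagliardo_prod s u w z \<partial>P) + b * (\<integral>z. gagliardo_prod s v w z \<partial>P)"
    using gagliardo_prod_integrable[OF assms(1,3)] gagliardo_prod_integrable[OF assms(2,3)]
    by (simp only: Bochner_Integration.integral_add integrable_mult_right integral_mult_right_zero)
  ultimately show ?thesis
    by (simp add: Es_def algebra_simps)
qed

lemma Es_symmetric: "Es s \<Omega> u v = Es s \<Omega> v u"
  by (simp add: Es_def mult.commute)

lemma Es_self: "Es s \<Omega> u u = (\<integral>z. gagliardo_sq s u z \<partial>P) / 2"
  by (simp add: Es_def power2_eq_square)

lemma Es_self_nonneg: "0 \<le> Es s \<Omega> u u"
  by (simp add: Es_self)

lemma nn_integral_gagliardo_sq:
  "u \<in> Hs s \<Omega> \<Longrightarrow> (\<integral>\<^sup>+ z. gagliardo_sq s u z \<partial>P) = ennreal (2 * Es s \<Omega> u u)"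
  by (simp add: Es_self Hs_iff nn_integral_eq_integral)

lemma Es_add_const: "Es s \<Omega> (\<lambda>x. u x + c) (\<lambda>x. v x + d) = Es s \<Omega> u v"
  by (simp add: Es_def)

lemma const_in_Hs: "(\<lambda>x. c) \<in> Hs s \<Omega>"
  by (simp add: Hs_iff L2_def)

lemma Xs_lincomb:
  assumes "u \<in> Xs s \<Omega>" "v \<in> Xs s \<Omega>"
  shows "(\<lambda>x. a * u x + b * v x) \<in> Xs s \<Omega>"
proof -
  have "u \<in> Hs s \<Omega>" "v \<in> Hs s \<Omega>" and "integral\<^sup>L M u = 0" "integral\<^sup>L M v = 0"
    using assms by (simp_all add: Xs_def)
  moreover from this have "integrable M u" "integrable M v"
    by (simp_all add: Hs_iff L2_integrable)
  ultimately show ?thesis by (simp add: Xs_def Hs_lincomb)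
qed

lemma Xs_diff: "u \<in> Xs s \<Omega> \<Longrightarrow> v \<in> Xs s \<Omega> \<Longrightarrow> (\<lambda>x. u x - v x) \<in> Xs s \<Omega>"
  using Xs_lincomb[where a = 1 and b = "-1"] by simp

lemma symmetric_psd_form_Xs: "symmetric_psd_form (Xs s \<Omega>) (Es s \<Omega>)"
proof
  show "u \<in> Xs s \<Omega> \<Longrightarrow> v \<in> Xs s \<Omega> \<Longrightarrow> (\<lambda>x. a * u x + b * v x) \<in> Xs s \<Omega>" for u v a b
    by (rule Xs_lincomb)
  show "u \<in> Xs s \<Omega> \<Longrightarrow> v \<in> Xs s \<Omega> \<Longrightarrow> w \<in> Xs s \<Omega> \<Longrightarrow>
      Es s \<Omega> (\<lambda>x. a * u x + b * v x) w = a * Es s \<Omega> u w + b * Es s \<Omega> v w" for u v w a b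
    by (simp add: Xs_def Es_linear_left)
qed (simp_all add: Es_symmetric Es_self_nonneg)

lemma measure_domain_pos: "\<Omega> \<noteq> {} \<Longrightarrow> 0 < measure M \<Omega>"
proof -
  assume "\<Omega> \<noteq> {}"
  then obtain x e where "0 < e" "ball x e \<subseteq> \<Omega>"
    using open_domain by (meson ex_in_conv open_contains_ball)
  then have "0 < measure lebesgue (ball x e)" by (simp add: content_ball_pos)
  also have "\<dots> \<le> measure lebesgue \<Omega>"
    using \<open>ball x e \<subseteq> \<Omega>\<close> lmeasurable_domain by (intro measure_mono_fmeasurable) auto
  finally show ?thesis
    using lmeasurable_domain by (simp add: measure_restrict_space)
qed

lemma subtract_mean_in_Xs:
  assumes "0 < measure M \<Omega>" "v \<in> Hs s \<Omega>"
  shows "(\<lambda>x. v x - integral\<^sup>L M v / measure M \<Omega>) \<in> Xs s \<Omega>"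
proof -
  let ?c = "integral\<^sup>L M v / measure M \<Omega>"
  have "(\<lambda>x. 1 * v x + (- ?c) * 1) \<in> Hs s \<Omega>"
    using assms(2) const_in_Hs by (rule Hs_lincomb)
  moreover have "integral\<^sup>L M (\<lambda>x. v x - ?c) = 0"
    using assms L2_integrable[of v] by (simp add: Hs_iff)
  ultimately show ?thesis by (simp add: Xs_def)
qed

lemma sq_diff_le_gagliardo_sq:
  assumes "0 \<le> s" "x \<in> \<Omega>" "y \<in> \<Omega>"
  shows "(u x - u y)\<^sup>2 \<le> diameter \<Omega> powr (real DIM('a) + 2 * s) * gagliardo_sq s u (x, y)"
proof (cases "x = y")
  case False
  let ?k = "norm (x - y) powr (real DIM('a) + 2 * s)"
  have "0 < ?k" using False by simp
  have "?k \<le> diameter \<Omega> powr (real DIM('a) + 2 * s)"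
    using diameter_bounded_bound[OF bounded assms(2,3)] assms(1) by (intro powr_mono2) (auto simp: dist_norm)
  then have "?k * ((u x - u y)\<^sup>2 / ?k) \<le> diameter \<Omega> powr (real DIM('a) + 2 * s) * ((u x - u y)\<^sup>2 / ?k)"
    by (intro mult_right_mono) auto
  with \<open>0 < ?k\<close> show ?thesis by simp
qed simp

lemma nn_integral_sq_diff:
  assumes "u \<in> L2 \<Omega>" "integral\<^sup>L M u = 0"
  shows "(\<integral>\<^sup>+ z. (u (fst z) - u (snd z))\<^sup>2 \<partial>P) = ennreal (2 * measure M \<Omega> * (\<integral>x. (u x)\<^sup>2 \<partial>M))"
proof -
  have [measurable]: "u \<in> borel_measurable M" and u2: "integrable M (\<lambda>x. (u x)\<^sup>2)"
    using assms(1) by (simp_all add: L2_def)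
  have u: "integrable M u" using assms(1) by (rule L2_integrable)
  let ?n2 = "\<integral>x. (u x)\<^sup>2 \<partial>M" and ?\<mu> = "measure M \<Omega>"
  have inner: "(\<integral>\<^sup>+ y. (u x - u y)\<^sup>2 \<partial>M) = ennreal (?\<mu> * (u x)\<^sup>2 + ?n2)" for x
  proof -
    have eq: "(\<lambda>y. (u x - u y)\<^sup>2) = (\<lambda>y. ((u x)\<^sup>2 - 2 * u x * u y) + (u y)\<^sup>2)"
      by (simp add: power2_eq_square algebra_simps)
    have "integrable M (\<lambda>y. (u x - u y)\<^sup>2)"
      unfolding eq using u u2 by simp
    moreover have "(\<integral>y. (u x - u y)\<^sup>2 \<partial>M) = ?\<mu> * (u x)\<^sup>2 + ?n2"
      unfolding eq using u u2 assms(2) by simp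
    ultimately show ?thesis by (simp add: nn_integral_eq_integral)
  qed
  have "(\<integral>\<^sup>+ z. (u (fst z) - u (snd z))\<^sup>2 \<partial>P) = (\<integral>\<^sup>+ x. \<integral>\<^sup>+ y. (u x - u y)\<^sup>2 \<partial>M \<partial>M)"
    using M.nn_integral_fst[of "\<lambda>z. ennreal ((u (fst z) - u (snd z))\<^sup>2)" M] by simp
  also have "\<dots> = (\<integral>\<^sup>+ x. ennreal (?\<mu> * (u x)\<^sup>2 + ?n2) \<partial>M)"
    by (simp add: inner)
  also have "\<dots> = ennreal (2 * ?\<mu> * ?n2)"
    using u2 by (subst nn_integral_eq_integral) (auto simp: add_nonneg_nonneg)
  finally show ?thesis .
qed

theorem Poincare:
  assumes "0 \<le> s" "u \<in> Xs s \<Omega>"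
  shows "measure M \<Omega> * (\<integral>x. (u x)\<^sup>2 \<partial>M) \<le> diameter \<Omega> powr (real DIM('a) + 2 * s) * Es s \<Omega> u u"
proof -
  let ?K = "diameter \<Omega> powr (real DIM('a) + 2 * s)"
  have u: "u \<in> Hs s \<Omega>" "u \<in> L2 \<Omega>" "integral\<^sup>L M u = 0"
    using assms(2) by (simp_all add: Xs_def Hs_iff)
  then have [measurable]: "u \<in> borel_measurable M" by (simp add: L2_def)
  have "ennreal (2 * measure M \<Omega> * (\<integral>x. (u x)\<^sup>2 \<partial>M)) = (\<integral>\<^sup>+ z. (u (fst z) - u (snd z))\<^sup>2 \<partial>P)"
    using u by (simp add: nn_integral_sq_diff)
  also have "\<dots> \<le> (\<integral>\<^sup>+ z. ?K * gagliardo_sq s u z \<partial>P)"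
    using sq_diff_le_gagliardo_sq[OF assms(1)] by (intro nn_integral_mono) (auto simp: space_pair_measure)
  also have "\<dots> = (\<integral>\<^sup>+ z. ennreal ?K * ennreal (gagliardo_sq s u z) \<partial>P)"
    by (intro nn_integral_cong) (simp add: ennreal_mult[symmetric])
  also have "\<dots> = ennreal ?K * (\<integral>\<^sup>+ z. gagliardo_sq s u z \<partial>P)"
    by (rule nn_integral_cmult) simp
  also have "\<dots> = ennreal (?K * (2 * Es s \<Omega> u u))"
    using u by (simp add: nn_integral_gagliardo_sq ennreal_mult Es_self_nonneg)
  finally show ?thesis
    using Es_self_nonneg by (subst (asm) ennreal_le_iff) auto
qed

lemma L2_Cauchy_AE_limit:
  fixes u :: "nat \<Rightarrow> 'a \<Rightarrow> real"
  assumes u: "\<And>n. u n \<in> L2 \<Omega>" and "strict_mono r"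
    and lim: "AE x in M. (\<lambda>k. u (r k) x) \<longlonglongrightarrow> w x"
    and Cauchy: "\<And>e. 0 < e \<Longrightarrow> \<exists>N. \<forall>n\<ge>N. \<forall>m\<ge>N. (\<integral>x. (u n x - u m x)\<^sup>2 \<partial>M) < e"
    and "0 < e"
  shows "\<exists>N. \<forall>n\<ge>N. (\<integral>\<^sup>+ x. (u n x - w x)\<^sup>2 \<partial>M) \<le> ennreal e"
proof (rule nn_integral_le_of_AE_subseq_limit[OF _ \<open>strict_mono r\<close>])
  have [measurable]: "u n \<in> borel_measurable M" for n
    using u by (simp add: L2_def)
  show "(\<lambda>x. (u n x - u m x)\<^sup>2) \<in> borel_measurable M" for n m
    by measurable
  show "AE x in M. (\<lambda>k. (u n x - u (r k) x)\<^sup>2) \<longlonglongrightarrow> (u n x - w x)\<^sup>2" for n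
    using lim by eventually_elim (intro tendsto_intros)
  obtain N where N: "\<And>n m. N \<le> n \<Longrightarrow> N \<le> m \<Longrightarrow> (\<integral>x. (u n x - u m x)\<^sup>2 \<partial>M) < e"
    using Cauchy[OF \<open>0 < e\<close>] by auto
  have "(\<integral>\<^sup>+ x. (u n x - u m x)\<^sup>2 \<partial>M) \<le> ennreal e" if "N \<le> n" "N \<le> m" for n m
  proof -
    have "(\<lambda>x. 1 * u n x + (-1) * u m x) \<in> L2 \<Omega>"
      by (rule L2_lincomb[OF u u])
    then have "(\<integral>\<^sup>+ x. (u n x - u m x)\<^sup>2 \<partial>M) = ennreal (\<integral>x. (u n x - u m x)\<^sup>2 \<partial>M)"
      by (intro nn_integral_eq_integral) (auto simp: L2_def)
    with N[OF that] show ?thesis by (simp add: ennreal_leI)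
  qed
  then show "\<exists>N. \<forall>n\<ge>N. \<forall>m\<ge>N. (\<integral>\<^sup>+ x. (u n x - u m x)\<^sup>2 \<partial>M) \<le> ennreal e"
    by blast
qed

lemma Es_Cauchy_AE_limit:
  fixes u :: "nat \<Rightarrow> 'a \<Rightarrow> real"
  assumes u: "\<And>n. u n \<in> Hs s \<Omega>" and "strict_mono r"
    and lim: "AE x in M. (\<lambda>k. u (r k) x) \<longlonglongrightarrow> w x"
    and Cauchy: "\<And>e. 0 < e \<Longrightarrow>
      \<exists>N. \<forall>n\<ge>N. \<forall>m\<ge>N. Es s \<Omega> (\<lambda>x. u n x - u m x) (\<lambda>x. u n x - u m x) < e"
    and "0 < e"
  shows "\<exists>N. \<forall>n\<ge>N. (\<integral>\<^sup>+ z. gagliardo_sq s (\<lambda>x. u n x - w x) z \<partial>P) \<le> ennreal e"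
proof (rule nn_integral_le_of_AE_subseq_limit[OF _ \<open>strict_mono r\<close>])
  have diff: "(\<lambda>x. u n x - u m x) \<in> Hs s \<Omega>" for n m
    by (rule Hs_diff[OF u u])
  then show "gagliardo_sq s (\<lambda>x. u n x - u m x) \<in> borel_measurable P" for n m
    by (intro measurable_gagliardo_sq) (simp add: Hs_iff L2_def)
  show "AE z in P. (\<lambda>k. gagliardo_sq s (\<lambda>x. u n x - u (r k) x) z)
      \<longlonglongrightarrow> gagliardo_sq s (\<lambda>x. u n x - w x) z" for n
    using AE_pair_measure_fst[OF lim] AE_pair_measure_snd[OF lim]
    by eventually_elim (unfold divide_inverse, auto intro!: tendsto_intros)
  obtain N where N: "\<And>n m. N \<le> n \<Longrightarrow> N \<le> m \<Longrightarrow>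
      Es s \<Omega> (\<lambda>x. u n x - u m x) (\<lambda>x. u n x - u m x) < e / 2"
    using Cauchy[of "e / 2"] \<open>0 < e\<close> by auto
  have "(\<integral>\<^sup>+ z. gagliardo_sq s (\<lambda>x. u n x - u m x) z \<partial>P) \<le> ennreal e" if "N \<le> n" "N \<le> m" for n m
    unfolding nn_integral_gagliardo_sq[OF diff] using N[OF that] by (intro ennreal_leI) simp
  then show "\<exists>N. \<forall>n\<ge>N. \<forall>m\<ge>N. (\<integral>\<^sup>+ z. gagliardo_sq s (\<lambda>x. u n x - u m x) z \<partial>P) \<le> ennreal e"
    by blast
qed

lemma Hs_complete:
  fixes u :: "nat \<Rightarrow> 'a \<Rightarrow> real"
  assumes u: "\<And>n. u n \<in> Hs s \<Omega>"
    and L2_Cauchy: "\<And>e. 0 < e \<Longrightarrow> \<exists>N. \<forall>n\<ge>N. \<forall>m\<ge>N. (\<integral>x. (u n x - u m x)\<^sup>2 \<partial>M) < e"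
    and Es_Cauchy: "\<And>e. 0 < e \<Longrightarrow>
      \<exists>N. \<forall>n\<ge>N. \<forall>m\<ge>N. Es s \<Omega> (\<lambda>x. u n x - u m x) (\<lambda>x. u n x - u m x) < e"
  obtains w where "w \<in> Hs s \<Omega>" "(\<lambda>n. Es s \<Omega> (\<lambda>x. u n x - w x) (\<lambda>x. u n x - w x)) \<longlonglongrightarrow> 0"
proof -
  have uL2: "u n \<in> L2 \<Omega>" for n
    using u by (simp add: Hs_iff)
  obtain r w where r: "strict_mono r" and "w \<in> borel_measurable M"
    and lim: "AE x in M. (\<lambda>k. u (r k) x) \<longlonglongrightarrow> w x"
    using M.square_Cauchy_imp_AE_convergent_subseq[of u] uL2 L2_Cauchy by (auto simp: L2_def)
  have Es_bound: "\<exists>N. \<forall>n\<ge>N. (\<integral>\<^sup>+ z. gagliardo_sq s (\<lambda>x. u n x - w x) z \<partial>P) \<le> ennreal e"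
    if "0 < e" for e
    by (rule Es_Cauchy_AE_limit[OF u r lim]) (use Es_Cauchy that in auto)
  obtain N1 where N1: "\<And>n. N1 \<le> n \<Longrightarrow> (\<integral>\<^sup>+ x. (u n x - w x)\<^sup>2 \<partial>M) \<le> 1"
    using L2_Cauchy_AE_limit[OF uL2 r lim L2_Cauchy zero_less_one] by auto
  obtain N2 where N2: "\<And>n. N2 \<le> n \<Longrightarrow> (\<integral>\<^sup>+ z. gagliardo_sq s (\<lambda>x. u n x - w x) z \<partial>P) \<le> 1"
    using Es_bound[of 1] by auto
  define n0 where "n0 = max N1 N2"
  have [measurable]: "u n0 \<in> borel_measurable M" "w \<in> borel_measurable M"
    using uL2[of n0] \<open>w \<in> borel_measurable M\<close> by (simp_all add: L2_def)
  have "(\<integral>\<^sup>+ x. (u n0 x - w x)\<^sup>2 \<partial>M) < \<infinity>"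
    using N1[of n0] by (simp add: n0_def le_less_trans)
  then have "(\<lambda>x. u n0 x - w x) \<in> L2 \<Omega>"
    by (simp add: L2_def integrable_iff_bounded)
  moreover have "(\<integral>\<^sup>+ z. gagliardo_sq s (\<lambda>x. u n0 x - w x) z \<partial>P) < \<infinity>"
    using N2[of n0] by (simp add: n0_def le_less_trans)
  then have "integrable P (gagliardo_sq s (\<lambda>x. u n0 x - w x))"
    by (simp add: integrable_iff_bounded)
  ultimately have "(\<lambda>x. u n0 x - w x) \<in> Hs s \<Omega>"
    by (simp add: Hs_iff)
  with u[of n0] have "(\<lambda>x. u n0 x - (u n0 x - w x)) \<in> Hs s \<Omega>"
    by (rule Hs_diff)
  then have w: "w \<in> Hs s \<Omega>" by simp
  have "\<exists>N. \<forall>n\<ge>N. norm (Es s \<Omega> (\<lambda>x. u n x - w x) (\<lambda>x. u n x - w x) - 0) < e" if e: "0 < e" for e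
  proof -
    obtain N where "\<And>n. N \<le> n \<Longrightarrow> ennreal (2 * Es s \<Omega> (\<lambda>x. u n x - w x) (\<lambda>x. u n x - w x)) \<le> ennreal e"
      using Es_bound[OF e] by (auto simp: nn_integral_gagliardo_sq[OF Hs_diff[OF u w]])
    then show ?thesis
      using e Es_self_nonneg by (fastforce simp: ennreal_le_iff)
  qed
  then have "(\<lambda>n. Es s \<Omega> (\<lambda>x. u n x - w x) (\<lambda>x. u n x - w x)) \<longlonglongrightarrow> 0"
    by (rule LIMSEQ_I)
  with w that show ?thesis by blast
qed

lemma Xs_complete:
  fixes u :: "nat \<Rightarrow> 'a \<Rightarrow> real"
  assumes "0 \<le> s" "\<Omega> \<noteq> {}" and u: "\<And>n. u n \<in> Xs s \<Omega>"
    and Cauchy: "\<And>e. 0 < e \<Longrightarrow>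
      \<exists>N. \<forall>n\<ge>N. \<forall>m\<ge>N. Es s \<Omega> (\<lambda>x. u n x - u m x) (\<lambda>x. u n x - u m x) < e"
  shows "\<exists>w\<in>Xs s \<Omega>. (\<lambda>n. Es s \<Omega> (\<lambda>x. u n x - w x) (\<lambda>x. u n x - w x)) \<longlonglongrightarrow> 0"
proof -
  let ?\<mu> = "measure M \<Omega>" and ?K = "diameter \<Omega> powr (real DIM('a) + 2 * s)"
  have \<mu>: "0 < ?\<mu>" using measure_domain_pos[OF \<open>\<Omega> \<noteq> {}\<close>] .
  have L2_Cauchy: "\<exists>N. \<forall>n\<ge>N. \<forall>m\<ge>N. (\<integral>x. (u n x - u m x)\<^sup>2 \<partial>M) < e" if "0 < e" for e
  proof -
    obtain N where N: "\<And>n m. N \<le> n \<Longrightarrow> N \<le> m \<Longrightarrow>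
        Es s \<Omega> (\<lambda>x. u n x - u m x) (\<lambda>x. u n x - u m x) < e * ?\<mu> / (?K + 1)"
      using Cauchy[of "e * ?\<mu> / (?K + 1)"] \<open>0 < e\<close> \<mu> by (auto simp: add_nonneg_pos)
    have "(\<integral>x. (u n x - u m x)\<^sup>2 \<partial>M) < e" if "N \<le> n" "N \<le> m" for n m
    proof -
      let ?E = "Es s \<Omega> (\<lambda>x. u n x - u m x) (\<lambda>x. u n x - u m x)"
      have "?\<mu> * (\<integral>x. (u n x - u m x)\<^sup>2 \<partial>M) \<le> ?K * ?E"
        using Poincare[OF \<open>0 \<le> s\<close> Xs_diff[OF u u]] .
      also have "\<dots> \<le> (?K + 1) * ?E"
        using Es_self_nonneg by (intro mult_right_mono) auto
      also have "\<dots> < e * ?\<mu>"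
        using N[OF that] pos_less_divide_eq[of "?K + 1"] by (simp add: add_nonneg_pos mult.commute)
      finally show ?thesis using \<mu> by (simp add: mult.commute)
    qed
    then show ?thesis by blast
  qed
  obtain w where w: "w \<in> Hs s \<Omega>" and lim: "(\<lambda>n. Es s \<Omega> (\<lambda>x. u n x - w x) (\<lambda>x. u n x - w x)) \<longlonglongrightarrow> 0"
    using Hs_complete[of u s] u L2_Cauchy Cauchy by (auto simp: Xs_def)
  let ?c = "integral\<^sup>L M w / ?\<mu>"
  have "(\<lambda>x. w x - ?c) \<in> Xs s \<Omega>"
    using subtract_mean_in_Xs[OF \<mu> w] .
  moreover have "Es s \<Omega> (\<lambda>x. u n x - (w x - ?c)) (\<lambda>x. u n x - (w x - ?c))
      = Es s \<Omega> (\<lambda>x. u n x - w x) (\<lambda>x. u n x - w x)" for n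
    using Es_add_const[of s "\<lambda>x. u n x - w x" ?c "\<lambda>x. u n x - w x" ?c] by (simp add: algebra_simps)
  ultimately show ?thesis
    using lim by (intro bexI[of _ "\<lambda>x. w x - ?c"]) simp_all
qed

lemma weak_solution_iff_Xs:
  assumes "\<Omega> \<noteq> {}" "f \<in> L2_0 \<Omega>"
  shows "weak_solution s \<Omega> f u \<longleftrightarrow> (\<forall>v\<in>Xs s \<Omega>. Es s \<Omega> u v = (\<integral>x. f x * v x \<partial>M))"
proof
  assume "weak_solution s \<Omega> f u"
  then show "\<forall>v\<in>Xs s \<Omega>. Es s \<Omega> u v = (\<integral>x. f x * v x \<partial>M)"
    by (simp add: weak_solution_def Xs_def)
next
  assume Xs_eq: "\<forall>v\<in>Xs s \<Omega>. Es s \<Omega> u v = (\<integral>x. f x * v x \<partial>M)"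
  have f: "f \<in> L2 \<Omega>" "integral\<^sup>L M f = 0"
    using assms(2) by (simp_all add: L2_0_def)
  show "weak_solution s \<Omega> f u"
    unfolding weak_solution_def
  proof
    fix v assume v: "v \<in> Hs s \<Omega>"
    let ?c = "integral\<^sup>L M v / measure M \<Omega>"
    have "Es s \<Omega> u v = Es s \<Omega> u (\<lambda>x. v x - ?c)"
      using Es_add_const[of s u 0 "\<lambda>x. v x - ?c" ?c] by simp
    also have "\<dots> = (\<integral>x. f x * (v x - ?c) \<partial>M)"
      using Xs_eq subtract_mean_in_Xs[OF measure_domain_pos[OF \<open>\<Omega> \<noteq> {}\<close>] v] by blast
    also have "\<dots> = (\<integral>x. f x * v x \<partial>M) - ?c * integral\<^sup>L M f"
      using L2_mult_integrable[OF f(1), of v] L2_integrable[OF f(1)] v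
      by (simp add: Hs_iff right_diff_distrib mult.commute)
    also have "\<dots> = (\<integral>x. f x * v x \<partial>M)"
      using f(2) by simp
    finally show "Es s \<Omega> u v = (\<integral>x. f x * v x \<partial>M)" .
  qed
qed

lemma weak_solution_exists:
  assumes "0 \<le> s" "\<Omega> \<noteq> {}" "f \<in> L2_0 \<Omega>"
  obtains u where "u \<in> Xs s \<Omega>" "weak_solution s \<Omega> f u"
proof -
  let ?\<mu> = "measure M \<Omega>" and ?K = "diameter \<Omega> powr (real DIM('a) + 2 * s)"
  have \<mu>: "0 < ?\<mu>" using measure_domain_pos[OF \<open>\<Omega> \<noteq> {}\<close>] .
  have f: "f \<in> L2 \<Omega>" using assms(3) by (simp add: L2_0_def)
  have XsL2: "u \<in> Xs s \<Omega> \<Longrightarrow> u \<in> L2 \<Omega>" for u by (simp add: Xs_def Hs_iff)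
  interpret Xs: bounded_functional "Xs s \<Omega>" "Es s \<Omega>" "\<lambda>v. \<integral>x. f x * v x \<partial>M"
    "(\<integral>x. (f x)\<^sup>2 \<partial>M) * ?K / ?\<mu>"
  proof (rule bounded_functional.intro[OF symmetric_psd_form_Xs], unfold_locales)
    fix u v :: "'a \<Rightarrow> real" and a b :: real
    assume "u \<in> Xs s \<Omega>" "v \<in> Xs s \<Omega>"
    then show "(\<integral>x. f x * (a * u x + b * v x) \<partial>M) = a * (\<integral>x. f x * u x \<partial>M) + b * (\<integral>x. f x * v x \<partial>M)"
      using L2_mult_integrable[OF f XsL2] by (simp add: distrib_left mult.left_commute)
  next
    fix u assume u: "u \<in> Xs s \<Omega>"
    have "(\<integral>x. f x * u x \<partial>M)\<^sup>2 \<le> (\<integral>x. (f x)\<^sup>2 \<partial>M) * (\<integral>x. (u x)\<^sup>2 \<partial>M)"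
      using f XsL2[OF u] by (intro integral_mult_Cauchy_Schwarz) (simp_all add: L2_def)
    also have "\<dots> \<le> (\<integral>x. (f x)\<^sup>2 \<partial>M) * (?K * Es s \<Omega> u u / ?\<mu>)"
      using Poincare[OF \<open>0 \<le> s\<close> u] \<mu> by (intro mult_left_mono) (simp_all add: pos_le_divide_eq mult.commute)
    finally show "(\<integral>x. f x * u x \<partial>M)\<^sup>2 \<le> (\<integral>x. (f x)\<^sup>2 \<partial>M) * ?K / ?\<mu> * Es s \<Omega> u u"
      by simp
  qed
  have "\<exists>u\<in>Xs s \<Omega>. \<forall>v\<in>Xs s \<Omega>. Es s \<Omega> u v = (\<integral>x. f x * v x \<partial>M)"
  proof (rule Xs.Riesz_representation)
    show "Xs s \<Omega> \<noteq> {}"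
      using const_in_Hs[of 0 s] by (auto simp: Xs_def)
  qed (use Xs_complete[OF \<open>0 \<le> s\<close> \<open>\<Omega> \<noteq> {}\<close>] in \<open>simp add: Xs.sqdist_def\<close>)
  then show ?thesis
    using weak_solution_iff_Xs[OF \<open>\<Omega> \<noteq> {}\<close> assms(3)] that by blast
qed

lemma weak_solution_unique:
  assumes "0 \<le> s" "\<Omega> \<noteq> {}" "u \<in> Xs s \<Omega>" "w \<in> Xs s \<Omega>"
    and "weak_solution s \<Omega> f u" "weak_solution s \<Omega> f w"
  shows "AE x in M. w x = u x"
proof -
  let ?d = "\<lambda>x. w x - u x"
  have d: "?d \<in> Xs s \<Omega>" using Xs_diff[OF assms(4,3)] .
  then have "?d \<in> Hs s \<Omega>" "u \<in> Hs s \<Omega>" "w \<in> Hs s \<Omega>"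
    using assms(3,4) by (simp_all add: Xs_def)
  then have "Es s \<Omega> ?d ?d = Es s \<Omega> w ?d - Es s \<Omega> u ?d"
    using Es_linear_left[where a = 1 and b = "-1"] by simp
  also have "\<dots> = 0"
    using assms(5,6) \<open>?d \<in> Hs s \<Omega>\<close> by (simp add: weak_solution_def)
  finally have "measure M \<Omega> * (\<integral>x. (?d x)\<^sup>2 \<partial>M) \<le> 0"
    using Poincare[OF \<open>0 \<le> s\<close> d] by simp
  then have "(\<integral>x. (?d x)\<^sup>2 \<partial>M) = 0"
    using measure_domain_pos[OF \<open>\<Omega> \<noteq> {}\<close>] by (simp add: mult_le_0_iff order_antisym)
  moreover have "integrable M (\<lambda>x. (?d x)\<^sup>2)"
    using d by (simp add: Xs_def Hs_iff L2_def)
  ultimately have "AE x in M. (?d x)\<^sup>2 = 0"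
    by (subst (asm) integral_nonneg_eq_0_iff_AE) auto
  then show ?thesis by eventually_elim simp
qed

end

theorem proposition3p5:
  fixes \<Omega> :: "'a::euclidean_space set" and s :: real and f :: "'a \<Rightarrow> real"
  assumes "bounded \<Omega>" and "open \<Omega>" and "lipschitz_set \<Omega>"
    and "0 \<le> s" and "s < 1"
    and "f \<in> L2_0 \<Omega>"
  shows "\<exists>u\<in>Xs s \<Omega>. weak_solution s \<Omega> f u \<and>
           (\<forall>w\<in>Xs s \<Omega>. weak_solution s \<Omega> f w \<longrightarrow>
              (AE x in lebesgue_on \<Omega>. w x = u x))"
proof -
  interpret bounded_open_domain \<Omega>
    using assms(1,2) by unfold_locales
  show ?thesis
  proof (cases "\<Omega> = {}")
    case True
    then have "weak_solution s \<Omega> f (\<lambda>x. 0)"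
      by (simp add: weak_solution_def Es_def)
    moreover have "(\<lambda>x. 0) \<in> Xs s \<Omega>"
      by (simp add: Xs_def const_in_Hs)
    moreover have "AE x in M. w x = 0" for w :: "'a \<Rightarrow> real"
      using True by (intro AE_I2) simp
    ultimately show ?thesis by blast
  next
    case False
    obtain u where "u \<in> Xs s \<Omega>" "weak_solution s \<Omega> f u"
      using weak_solution_exists[OF \<open>0 \<le> s\<close> False \<open>f \<in> L2_0 \<Omega>\<close>] .
    then show ?thesis
      using weak_solution_unique[OF \<open>0 \<le> s\<close> False] by blast
  qed
qed

end
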